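(* Let $d\in(0,1]$ and $\kappa>0$, and let $L_d$, $E$ and $D(L_d)$ be as in the context. (Parabolic version) If $u\in C(\mathbb{R}^+,D(L_d))$ satisfies $u_t-L_d u\ge 0$ in $\mathbb{R}^+\times[0,1]^2$ and $u(0,x)=f(x)\ge 0$ for $x\in[0,1]^2$, then $u(t,x)\ge 0$ for all $t\ge0$, $x\in[0,1]^2$. (Elliptic version) If $u\in D(L_d)$ satisfies $-L_d u\ge 0$ in $[0,1]^2$, then $u(x)\ge 0$ for all $x\in[0,1]^2$.
   Context: Let $\mathcal D=[0,1]^2$, $M=\begin{pmatrix} d & -d\\ -1 & 1\end{pmatrix}$, and $$L_d u(x)=\frac{x_1(1-x_1)}{2}u_{x_1x_1}(x)+\frac{x_2(1-x_2)}{2d}u_{x_2x_2}(x)-\kappa\, Mx\cdot\nabla u(x).$$ Let $E=\{f\in C(\mathcal D): f(0,0)=f(1,1)=0\}$ with the sup norm. For $N$ with $N_2=dN$ an integer, let $N_1=N$, $\delta t=1/N$, $A=\mathrm{Id}-\frac{\kappa}{N}M$, and $$B_N(g)(x)=\sum_{j_1=0}^{N_1}\sum_{j_2=0}^{N_2}\binom{N_1}{j_1}\binom{N_2}{j_2}x_1^{j_1}(1-x_1)^{N_1-j_1}x_2^{j_2}(1-x_2)^{N_2-j_2}\,g\!\left(\tfrac{j_1}{N_1},\tfrac{j_2}{N_2}\right).$$ The domain is $D(L_d)=\{f\in E:\ (B_N(f\circ A)-f)/\delta t\to L_d f \text{ in } E \text{ as } N\to\infty\}$. In particular every $u\in D(L_d)$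 vanishes at $(0,0)$ and $(1,1)$; no condition is imposed on the rest of the boundary. *)

theory Defs
  imports Complex_Main
begin

definition Dsq :: "(real \<times> real) set" where
  "Dsq = {0..1} \<times> {0..1}"

text \<open>The space E = {f in C(D) : f(0,0) = f(1,1) = 0}. Functions are total on
  real x real; only their values on D matter.\<close>
definition Espace :: "(real \<times> real \<Rightarrow> real) set" where
  "Espace = {f. continuous_on Dsq f \<and> f (0,0) = 0 \<and> f (1,1) = 0}"

definition Mmap :: "real \<Rightarrow> real \<times> real \<Rightarrow> real \<times> real" where
  "Mmap d x = (d * fst x - d * snd x, - fst x + snd x)"

definition Amap :: "real \<Rightarrow> real \<Rightarrow> nat \<Rightarrow> real \<times> real \<Rightarrow> real \<times> real" where
  "Amap \<kappa> d N x = (fst x - (\<kappa> / real N) * fst (Mmap d x), snd x - (\<kappa> / real N) * snd (Mmap d x))"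

definition Bern :: "nat \<Rightarrow> nat \<Rightarrow> (real \<times> real \<Rightarrow> real) \<Rightarrow> real \<times> real \<Rightarrow> real" where
  "Bern N1 N2 g x = (\<Sum>j1\<in>{0..N1}. \<Sum>j2\<in>{0..N2}.
      real (N1 choose j1) * real (N2 choose j2)
      * fst x ^ j1 * (1 - fst x) ^ (N1 - j1) * snd x ^ j2 * (1 - snd x) ^ (N2 - j2)
      * g (real j1 / real N1, real j2 / real N2))"

definition admissible :: "real \<Rightarrow> nat \<Rightarrow> bool" where
  "admissible d N \<longleftrightarrow> N \<ge> 1 \<and> d * real N \<in> \<nat>"

definition gen_quot :: "real \<Rightarrow> real \<Rightarrow> (real \<times> real \<Rightarrow> real) \<Rightarrow> nat \<Rightarrow> real \<times> real \<Rightarrow> real" where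
  "gen_quot \<kappa> d f N x =
     (Bern N (nat (round (d * real N))) (f \<circ> Amap \<kappa> d N) x - f x) / (1 / real N)"

definition gen_conv :: "real \<Rightarrow> real \<Rightarrow> (real \<times> real \<Rightarrow> real) \<Rightarrow> (real \<times> real \<Rightarrow> real) \<Rightarrow> bool" where
  "gen_conv \<kappa> d f g \<longleftrightarrow>
     (\<forall>\<epsilon>>0. \<exists>N0. \<forall>N\<ge>N0. admissible d N \<longrightarrow> (\<forall>x\<in>Dsq. \<bar>gen_quot \<kappa> d f N x - g x\<bar> \<le> \<epsilon>))"

text \<open>D(L_d): f in E such that the quotients converge in E (admissible N must be
  unbounded for "N \<rightarrow> \<infinity>" to make sense).\<close>
definition DLd :: "real \<Rightarrow> real \<Rightarrow> (real \<times> real \<Rightarrow> real) set" where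
  "DLd \<kappa> d = {f. f \<in> Espace \<and> infinite {N. admissible d N} \<and> (\<exists>g\<in>Espace. gen_conv \<kappa> d f g)}"

definition Ld :: "real \<Rightarrow> real \<Rightarrow> (real \<times> real \<Rightarrow> real) \<Rightarrow> real \<times> real \<Rightarrow> real" where
  "Ld \<kappa> d f = (SOME g. g \<in> Espace \<and> gen_conv \<kappa> d f g)"

definition cont_E :: "(real \<Rightarrow> real \<times> real \<Rightarrow> real) \<Rightarrow> bool" where
  "cont_E u \<longleftrightarrow> (\<forall>t\<ge>0. \<forall>\<epsilon>>0. \<exists>\<delta>>0. \<forall>s\<ge>0. \<bar>s - t\<bar> < \<delta> \<longrightarrow>
       (\<forall>x\<in>Dsq. \<bar>u s x - u t x\<bar> \<le> \<epsilon>))"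

end

(* At a minimum point x0 of f on the square, (B_N(f o A) - f)(x0) >= 0: for N >= kappa the map
   A = Id - (kappa/N) M sends the square into itself, and B_N is positive and reproduces constants.
   In the limit, L_d f >= 0 at every minimum point of f in D(L_d).

   Parabolic case: if u(T,x) < 0, then u(t,y) + eps t attains a negative minimum over [0,T] x D at
   some (t1,x1) with t1 > 0.  There the time derivative of u + eps t must be <= 0 from the left,
   whereas it equals u_t + eps >= L_d u(t1)(x1) + eps > 0.

   Elliptic case: -L_d u >= 0 is not strict, so u is perturbed by eps h with a quadratic h <= 0
   whose discrete quotients converge to a negative limit away from the corners (0,0) and (1,1).
   Then u + eps h can only attain its minimum at a corner, where u vanishes, so that
   u >= eps h(1,1) for every eps > 0. *)
theory Submission
  imports Defs "HOL-Analysis.Weierstrass_Theorems"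
begin

definition quad_form :: "real \<Rightarrow> real \<Rightarrow> real \<Rightarrow> real \<times> real \<Rightarrow> real" where
  "quad_form a b c y = a * (fst y)^2 + b * (fst y * snd y) + c * (snd y)^2"

lemma quad_form_linear:
  "quad_form a b c (p11 * fst y + p12 * snd y, p21 * fst y + p22 * snd y)
   = quad_form (quad_form a b c (p11, p21))
       (2 * a * p11 * p12 + b * (p11 * p22 + p12 * p21) + 2 * c * p21 * p22)
       (quad_form a b c (p12, p22)) y"
  unfolding quad_form_def by simp algebra

lemma sum_Bernstein_quadratic:
  assumes "n \<ge> 1"
  shows "(\<Sum>k\<le>n. Bernstein n k x * (c0 + c1 * (real k / real n) + c2 * (real k / real n)^2))
         = c0 + c1 * x + c2 * (x^2 + x * (1 - x) / real n)"
proof -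
  have n: "real n > 0" using assms by simp
  have "(\<Sum>k\<le>n. Bernstein n k x * (c0 + c1 * (real k / real n) + c2 * (real k / real n)^2))
     = (\<Sum>k\<le>n. c0 * Bernstein n k x + (c1 / real n) * (real k * Bernstein n k x)
       + (c2 / (real n)^2) * (real k * (real k - 1) * Bernstein n k x)
       + (c2 / (real n)^2) * (real k * Bernstein n k x))"
    using n by (intro sum.cong) (simp_all add: field_simps power2_eq_square)
  also have "\<dots>
     = c0 * (\<Sum>k\<le>n. Bernstein n k x) + (c1 / real n) * (\<Sum>k\<le>n. real k * Bernstein n k x)
       + (c2 / (real n)^2) * (\<Sum>k\<le>n. real k * (real k - 1) * Bernstein n k x)
       + (c2 / (real n)^2) * (\<Sum>k\<le>n. real k * Bernstein n k x)"
    by (simp only: sum.distrib sum_distrib_left)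
  also have "\<dots> = c0 + c1 * x + c2 * (x^2 + x * (1 - x) / real n)"
    unfolding sum_Bernstein sum_k_Bernstein sum_kk_Bernstein
    using n by (simp add: field_simps power2_eq_square)
  finally show ?thesis .
qed

lemma Bern_eq_sum_Bernstein:
  "Bern N1 N2 g x = (\<Sum>j1\<le>N1. \<Sum>j2\<le>N2. Bernstein N1 j1 (fst x) * Bernstein N2 j2 (snd x)
      * g (real j1 / real N1, real j2 / real N2))"
  unfolding Bern_def Bernstein_def atLeast0AtMost by (simp add: mult_ac)

lemma Bern_add_scaled: "Bern N1 N2 (\<lambda>y. f y + c * g y) x = Bern N1 N2 f x + c * Bern N1 N2 g x"
  unfolding Bern_def by (simp add: sum.distrib sum_distrib_left algebra_simps)

lemma Bern_quad_form:
  assumes "N1 \<ge> 1" "N2 \<ge> 1"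
  shows "Bern N1 N2 (quad_form a b c) x
     = quad_form a b c x + a * fst x * (1 - fst x) / real N1 + c * snd x * (1 - snd x) / real N2"
proof -
  let ?v = "\<lambda>y. y^2 + y * (1 - y) / real N2"
  have inner: "(\<Sum>j2\<le>N2. Bernstein N1 j1 (fst x) * Bernstein N2 j2 (snd x)
        * quad_form a b c (real j1 / real N1, real j2 / real N2))
      = Bernstein N1 j1 (fst x) * (c * ?v (snd x) + b * snd x * (real j1 / real N1)
          + a * (real j1 / real N1)^2)" for j1
  proof -
    have "(\<Sum>j2\<le>N2. Bernstein N1 j1 (fst x) * Bernstein N2 j2 (snd x)
        * quad_form a b c (real j1 / real N1, real j2 / real N2))
      = Bernstein N1 j1 (fst x) * (\<Sum>j2\<le>N2. Bernstein N2 j2 (snd x) *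
         (a * (real j1 / real N1)^2 + (b * (real j1 / real N1)) * (real j2 / real N2)
          + c * (real j2 / real N2)^2))"
      by (simp add: quad_form_def sum_distrib_left algebra_simps)
    also have "\<dots> = Bernstein N1 j1 (fst x) * (a * (real j1 / real N1)^2
        + b * (real j1 / real N1) * snd x + c * ?v (snd x))"
      by (simp only: sum_Bernstein_quadratic[OF assms(2)])
    finally show ?thesis by (simp add: algebra_simps)
  qed
  have "Bern N1 N2 (quad_form a b c) x
     = (\<Sum>j1\<le>N1. Bernstein N1 j1 (fst x) * (c * ?v (snd x) + b * snd x * (real j1 / real N1)
          + a * (real j1 / real N1)^2))"
    unfolding Bern_eq_sum_Bernstein inner ..
  also have "\<dots> = c * ?v (snd x) + b * snd x * fst x + a * ((fst x)^2 + fst x * (1 - fst x) / real N1)"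
    by (rule sum_Bernstein_quadratic[OF assms(1)])
  finally show ?thesis by (simp add: quad_form_def algebra_simps)
qed

lemma Bern_ge_const:
  assumes "x \<in> Dsq"
    and "\<And>j1 j2. j1 \<le> N1 \<Longrightarrow> j2 \<le> N2 \<Longrightarrow> c \<le> g (real j1 / real N1, real j2 / real N2)"
  shows "c \<le> Bern N1 N2 g x"
proof -
  have x: "0 \<le> fst x" "fst x \<le> 1" "0 \<le> snd x" "snd x \<le> 1"
    using assms(1) unfolding Dsq_def by auto
  have "c = (\<Sum>j1\<le>N1. \<Sum>j2\<le>N2. Bernstein N1 j1 (fst x) * Bernstein N2 j2 (snd x) * c)"
    by (simp add: sum_distrib_left[symmetric] sum_distrib_right[symmetric])
  also have "\<dots> \<le> Bern N1 N2 g x"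
    unfolding Bern_eq_sum_Bernstein
    using x assms(2) by (intro sum_mono mult_left_mono) (auto simp: Bernstein_nonneg)
  finally show ?thesis .
qed

lemma Amap_eq:
  "Amap \<kappa> d N y = ((1 - \<kappa> / real N * d) * fst y + \<kappa> / real N * d * snd y,
                    \<kappa> / real N * fst y + (1 - \<kappa> / real N) * snd y)"
  unfolding Amap_def Mmap_def by (simp add: algebra_simps)

lemma Amap_in_Dsq:
  assumes "y \<in> Dsq" "0 \<le> d" "d \<le> 1" "0 \<le> \<kappa>" "\<kappa> \<le> real N"
  shows "Amap \<kappa> d N y \<in> Dsq"
proof -
  define t where "t = \<kappa> / real N"
  have t: "0 \<le> t" "t \<le> 1" using assms by (auto simp: t_def divide_le_eq_1)
  have td: "0 \<le> t * d" "t * d \<le> 1" using t assms by (auto simp: mult_le_one)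
  obtain a b where y: "y = (a, b)" "0 \<le> a" "a \<le> 1" "0 \<le> b" "b \<le> 1"
    using assms(1) unfolding Dsq_def by auto
  have "(1 - t * d) * a + t * d * b \<le> 1"
    using convex_bound_le[of a 1 b "1 - t * d" "t * d"] td y by simp
  moreover have "t * a + (1 - t) * b \<le> 1"
    using convex_bound_le[of a 1 b t "1 - t"] t y by simp
  ultimately show ?thesis
    using t td y unfolding Amap_eq t_def[symmetric] Dsq_def by simp
qed

lemma gen_quot_add_scaled:
  "gen_quot \<kappa> d (\<lambda>y. f y + c * g y) N x = gen_quot \<kappa> d f N x + c * gen_quot \<kappa> d g N x"
  unfolding gen_quot_def o_def by (simp add: Bern_add_scaled algebra_simps)

lemma gen_quot_nonneg_at_min:
  assumes "0 \<le> d" "d \<le> 1" "0 \<le> \<kappa>" "\<kappa> \<le> real N"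
    and "x0 \<in> Dsq" and min: "\<And>y. y \<in> Dsq \<Longrightarrow> f x0 \<le> f y"
  shows "gen_quot \<kappa> d f N x0 \<ge> 0"
proof -
  let ?K = "nat (round (d * real N))"
  have "f x0 \<le> (f \<circ> Amap \<kappa> d N) (real j1 / real N, real j2 / real ?K)"
    if "j1 \<le> N" "j2 \<le> ?K" for j1 j2
  proof -
    have "(real j1 / real N, real j2 / real ?K) \<in> Dsq"
      using that unfolding Dsq_def by (auto simp: divide_le_eq_1)
    then show ?thesis using Amap_in_Dsq[OF _ assms(1-4)] min by simp
  qed
  then have "f x0 \<le> Bern N ?K (f \<circ> Amap \<kappa> d N) x0"
    using assms(5) by (rule Bern_ge_const[rotated])
  then show ?thesis unfolding gen_quot_def by simp
qed

lemma DLd_gen_quot_approx: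
  assumes "u \<in> DLd \<kappa> d" "e > 0"
  shows "\<exists>N\<ge>M. admissible d N \<and> (\<forall>x\<in>Dsq. \<bar>gen_quot \<kappa> d u N x - Ld \<kappa> d u x\<bar> \<le> e)"
proof -
  have "\<exists>g. g \<in> Espace \<and> gen_conv \<kappa> d u g" using assms unfolding DLd_def by auto
  then have "gen_conv \<kappa> d u (Ld \<kappa> d u)"
    unfolding Ld_def by (rule someI2_ex) auto
  then obtain N0 where N0: "\<forall>N\<ge>N0. admissible d N \<longrightarrow>
      (\<forall>x\<in>Dsq. \<bar>gen_quot \<kappa> d u N x - Ld \<kappa> d u x\<bar> \<le> e)"
    using assms(2) unfolding gen_conv_def by blast
  have "infinite {N. admissible d N}" using assms unfolding DLd_def by auto
  then obtain N where "max M N0 \<le> N" "admissible d N"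
    unfolding infinite_nat_iff_unbounded_le by blast
  with N0 show ?thesis by auto
qed

lemma Ld_nonneg_at_min:
  assumes "u \<in> DLd \<kappa> d" "0 \<le> d" "d \<le> 1" "0 \<le> \<kappa>"
    and "x0 \<in> Dsq" and "\<And>y. y \<in> Dsq \<Longrightarrow> u x0 \<le> u y"
  shows "Ld \<kappa> d u x0 \<ge> 0"
proof (rule field_le_epsilon)
  fix e :: real assume "e > 0"
  then obtain N where N: "N \<ge> nat \<lceil>\<kappa>\<rceil>"
      and close: "\<forall>x\<in>Dsq. \<bar>gen_quot \<kappa> d u N x - Ld \<kappa> d u x\<bar> \<le> e"
    using DLd_gen_quot_approx[OF assms(1)] by blast
  have "\<kappa> \<le> real N" using N by linarith
  then have "gen_quot \<kappa> d u N x0 \<ge> 0"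
    using assms by (intro gen_quot_nonneg_at_min) auto
  with close \<open>x0 \<in> Dsq\<close> show "0 \<le> Ld \<kappa> d u x0 + e" by force
qed

(* The coefficients are chosen so that the drift contributes only -2 kappa d^2 (x1 - x2)^2 <= 0
   to L_d (barrier d); see barrier_shift. *)
definition barrier :: "real \<Rightarrow> real \<times> real \<Rightarrow> real" where
  "barrier d = quad_form (-2) (-2 * d * (2 + d)) (- (d^2) * (1 + d))"

lemma barrier_shift:
  "barrier d (fst y - t * fst (Mmap d y), snd y - t * snd (Mmap d y))
   = barrier d y - t * (2 * d^2 * (fst y - snd y)^2) + t^2 * barrier d (Mmap d y)"
  unfolding barrier_def quad_form_def Mmap_def by simp algebra

lemma barrier_nonpos:
  assumes "0 \<le> d" "0 \<le> fst x" "0 \<le> snd x"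
  shows "barrier d x \<le> 0"
proof -
  have "0 \<le> d * (2 + d) * (fst x * snd x)" "0 \<le> d^2 * (1 + d) * (snd x)^2"
    using assms by simp_all
  then show ?thesis unfolding barrier_def quad_form_def
    using zero_le_power2[of "fst x"] by linarith
qed

definition barrier_quot :: "real \<Rightarrow> real \<Rightarrow> real \<Rightarrow> real \<times> real \<Rightarrow> real" where
  "barrier_quot d \<kappa> t x = -2 * \<kappa> * d^2 * (fst x - snd x)^2 + \<kappa> * t * barrier d (Mmap d x)
     + fst x * (1 - fst x) * barrier d (1 - t * d, t)
     + snd x * (1 - snd x) / d * barrier d (t * d, 1 - t)"

lemma gen_quot_barrier:
  assumes "admissible d N" "0 < d"
  shows "gen_quot \<kappa> d (barrier d) N x = barrier_quot d \<kappa> (\<kappa> / real N) x"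
proof -
  define t where "t = \<kappa> / real N"
  define K where "K = nat (round (d * real N))"
  obtain m where m: "d * real N = real m" "N \<ge> 1"
    using assms(1) unfolding admissible_def Nats_def by auto
  moreover have "real m > 0" unfolding m(1)[symmetric] using m(2) assms(2) by simp
  ultimately have K: "real K = d * real N" "K \<ge> 1" "real N > 0"
    by (auto simp: K_def)
  have Nt: "real N * t = \<kappa>" using K by (simp add: t_def)
  obtain b where comp: "barrier d \<circ> Amap \<kappa> d N
      = quad_form (barrier d (1 - t * d, t)) b (barrier d (t * d, 1 - t))"
    unfolding barrier_def o_def Amap_eq t_def[symmetric] quad_form_linear by blast
  have "Bern N K (barrier d \<circ> Amap \<kappa> d N) x
      = barrier d (Amap \<kappa> d N x) + barrier d (1 - t * d, t) * fst x * (1 - fst x) / real N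
        + barrier d (t * d, 1 - t) * snd x * (1 - snd x) / (d * real N)"
    unfolding comp Bern_quad_form[OF m(2) K(2)] K(1)
    unfolding comp[symmetric] by simp
  also have "barrier d (Amap \<kappa> d N x)
      = barrier d x - t * (2 * d^2 * (fst x - snd x)^2) + t^2 * barrier d (Mmap d x)"
    unfolding Amap_def t_def[symmetric] by (rule barrier_shift)
  finally have "gen_quot \<kappa> d (barrier d) N x
      = real N * (- t * (2 * d^2 * (fst x - snd x)^2) + t^2 * barrier d (Mmap d x)
        + barrier d (1 - t * d, t) * fst x * (1 - fst x) / real N
        + barrier d (t * d, 1 - t) * snd x * (1 - snd x) / (d * real N))"
    unfolding gen_quot_def K_def[symmetric] by (simp add: o_def)
  also have "\<dots> = barrier_quot d \<kappa> t x"
    unfolding barrier_quot_def Nt[symmetric]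
    using K(3) assms(2) by (simp add: field_simps power2_eq_square)
  finally show ?thesis unfolding t_def .
qed

definition Ld_barrier :: "real \<Rightarrow> real \<Rightarrow> real \<times> real \<Rightarrow> real" where
  "Ld_barrier d \<kappa> x = -2 * \<kappa> * d^2 * (fst x - snd x)^2 - 2 * fst x * (1 - fst x) - d * (1 + d) * snd x * (1 - snd x)"

lemma barrier_quot_tendsto:
  assumes "0 < d"
  shows "(\<lambda>N. barrier_quot d \<kappa> (\<kappa> / real N) x) \<longlonglongrightarrow> Ld_barrier d \<kappa> x"
proof -
  have "(\<lambda>N. barrier_quot d \<kappa> (\<kappa> / real N) x) \<longlonglongrightarrow> barrier_quot d \<kappa> 0 x"
  proof (rule isCont_tendsto_compose[where g="\<lambda>t. barrier_quot d \<kappa> t x"])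
    show "isCont (\<lambda>t. barrier_quot d \<kappa> t x) 0"
      unfolding barrier_quot_def barrier_def quad_form_def by (intro continuous_intros)
  qed (rule lim_const_over_n)
  also have "barrier_quot d \<kappa> 0 x = Ld_barrier d \<kappa> x"
    using assms unfolding barrier_quot_def barrier_def quad_form_def Ld_barrier_def
    by (simp add: field_simps power2_eq_square)
  finally show ?thesis .
qed

lemma Ld_barrier_neg:
  assumes "x \<in> Dsq" "0 < d" "0 < \<kappa>" "x \<noteq> (0, 0)" "x \<noteq> (1, 1)"
  shows "Ld_barrier d \<kappa> x < 0"
proof -
  obtain a b where ab: "x = (a, b)" "0 \<le> a" "a \<le> 1" "0 \<le> b" "b \<le> 1"
    using assms(1) unfolding Dsq_def by auto
  have "0 \<le> d * (1 + d) * b * (1 - b)" using ab assms(2) by simp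
  moreover have "0 < \<kappa> * d^2 * (a - b)^2 + a * (1 - a)"
  proof (cases "a = b")
    case True
    then have "a \<noteq> 0" "a \<noteq> 1" using ab assms(4,5) by auto
    with ab True show ?thesis by simp
  next
    case False
    have "0 \<le> a * (1 - a)" using ab by simp
    with False assms(2,3) show ?thesis by (simp add: add_pos_nonneg)
  qed
  ultimately show ?thesis using ab unfolding Ld_barrier_def by simp
qed

lemma perturbed_min_at_corner:
  assumes "0 < d" "d \<le> 1" "0 < \<kappa>" "u \<in> DLd \<kappa> d" "\<forall>x\<in>Dsq. Ld \<kappa> d u x \<le> 0"
    and "\<epsilon> > 0" and "x0 \<in> Dsq"
    and min: "\<And>y. y \<in> Dsq \<Longrightarrow> u x0 + \<epsilon> * barrier d x0 \<le> u y + \<epsilon> * barrier d y"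
  shows "x0 = (0, 0) \<or> x0 = (1, 1)"
proof (rule ccontr)
  assume not_corner: "\<not> ?thesis"
  define Lh where "Lh = Ld_barrier d \<kappa> x0"
  have Lh: "Lh < 0"
    unfolding Lh_def using Ld_barrier_neg assms not_corner by blast
  have "(\<lambda>N. barrier_quot d \<kappa> (\<kappa> / real N) x0) \<longlonglongrightarrow> Lh"
    unfolding Lh_def by (rule barrier_quot_tendsto[OF assms(1)])
  then have "eventually (\<lambda>N. barrier_quot d \<kappa> (\<kappa> / real N) x0 < Lh / 2) sequentially"
    using Lh by (intro order_tendstoD(2)) (simp_all, linarith)
  then obtain N1 where N1: "\<And>N. N \<ge> N1 \<Longrightarrow> barrier_quot d \<kappa> (\<kappa> / real N) x0 < Lh / 2"
    unfolding eventually_sequentially by blast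
  have "- \<epsilon> * Lh / 4 > 0" using assms(6) Lh by (simp add: mult_pos_neg)
  then obtain N where N: "N \<ge> max N1 (nat \<lceil>\<kappa>\<rceil>)" "admissible d N"
      and close: "\<forall>x\<in>Dsq. \<bar>gen_quot \<kappa> d u N x - Ld \<kappa> d u x\<bar> \<le> - \<epsilon> * Lh / 4"
    using DLd_gen_quot_approx[OF assms(4)] by blast
  have "\<kappa> \<le> real N" using N(1) by linarith
  then have "0 \<le> gen_quot \<kappa> d (\<lambda>y. u y + \<epsilon> * barrier d y) N x0"
    using assms min by (intro gen_quot_nonneg_at_min) auto
  also have "\<dots> = gen_quot \<kappa> d u N x0 + \<epsilon> * barrier_quot d \<kappa> (\<kappa> / real N) x0"
    unfolding gen_quot_add_scaled gen_quot_barrier[OF N(2) assms(1)] ..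
  also have "\<dots> < - \<epsilon> * Lh / 4 + \<epsilon> * (Lh / 2)"
  proof (rule add_le_less_mono)
    show "gen_quot \<kappa> d u N x0 \<le> - \<epsilon> * Lh / 4"
      using close assms(5,7) by fastforce
    show "\<epsilon> * barrier_quot d \<kappa> (\<kappa> / real N) x0 < \<epsilon> * (Lh / 2)"
      using N1 N(1) assms(6) by simp
  qed
  finally show False using mult_pos_neg[OF assms(6) Lh] by (simp add: mult.commute)
qed

lemma elliptic_min_principle:
  assumes "0 < d" "d \<le> 1" "0 < \<kappa>" "u \<in> DLd \<kappa> d" "\<forall>x\<in>Dsq. Ld \<kappa> d u x \<le> 0"
    and "x \<in> Dsq"
  shows "0 \<le> u x"
proof -
  define c where "c = - barrier d (1, 1)"
  have "0 \<le> d * (2 + d)" "0 \<le> d^2 * (1 + d)" using assms(1) by simp_all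
  then have c: "c > 0" unfolding c_def barrier_def quad_form_def by simp
  have uE: "continuous_on Dsq u" "u (0, 0) = 0" "u (1, 1) = 0"
    using assms(4) unfolding DLd_def Espace_def by auto
  have "0 \<le> u x + e" if "e > 0" for e
  proof -
    define \<epsilon> where "\<epsilon> = e / c"
    have \<epsilon>: "\<epsilon> > 0" using c \<open>e > 0\<close> by (simp add: \<epsilon>_def)
    have "continuous_on Dsq (\<lambda>y. u y + \<epsilon> * barrier d y)"
      unfolding barrier_def quad_form_def by (intro continuous_intros uE(1))
    moreover have "compact Dsq" unfolding Dsq_def by (intro compact_Times compact_Icc)
    ultimately obtain x0 where x0: "x0 \<in> Dsq"
        and min: "\<And>y. y \<in> Dsq \<Longrightarrow> u x0 + \<epsilon> * barrier d x0 \<le> u y + \<epsilon> * barrier d y"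
      using continuous_attains_inf[of Dsq] assms(6) by blast
    have "\<epsilon> * barrier d (1, 1) = - e"
      using c unfolding \<epsilon>_def c_def by simp
    moreover have "barrier d (0, 0) = 0" by (simp add: barrier_def quad_form_def)
    ultimately have "- e \<le> u x0 + \<epsilon> * barrier d x0"
      using perturbed_min_at_corner[OF assms(1-5) \<epsilon> x0 min] uE \<open>e > 0\<close> by auto
    also have "\<dots> \<le> u x + \<epsilon> * barrier d x" using min assms(6) .
    also have "\<dots> \<le> u x"
      using barrier_nonpos[of d x] assms(1,6) \<epsilon> unfolding Dsq_def
      by (auto simp: mult_nonneg_nonpos)
    finally show ?thesis by simp
  qed
  then show ?thesis by (rule field_le_epsilon)
qed

lemma continuous_on_Times_cont_E:
  fixes u :: "real \<Rightarrow> real \<times> real \<Rightarrow> real"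
  assumes "\<forall>t\<ge>0. continuous_on Dsq (u t)" and "cont_E u"
  shows "continuous_on ({0..} \<times> Dsq) (\<lambda>p. u (fst p) (snd p))"
  unfolding continuous_on_iff
proof (intro ballI allI impI)
  fix p :: "real \<times> real \<times> real" and e :: real assume p: "p \<in> {0..} \<times> Dsq" and "0 < e"
  obtain t y where py: "p = (t, y)" "t \<ge> 0" "y \<in> Dsq" using p by auto
  have e2: "e / 2 > 0" using \<open>0 < e\<close> by simp
  obtain \<delta>1 where \<delta>1: "\<delta>1 > 0" "\<forall>s\<ge>0. \<bar>s - t\<bar> < \<delta>1 \<longrightarrow> (\<forall>z\<in>Dsq. \<bar>u s z - u t z\<bar> \<le> e / 2)"
    using assms(2) py(2) e2 unfolding cont_E_def by blast
  have "continuous_on Dsq (u t)" using assms(1) py(2) by blast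
  then obtain \<delta>2 where \<delta>2: "\<delta>2 > 0" "\<forall>z\<in>Dsq. dist z y < \<delta>2 \<longrightarrow> dist (u t z) (u t y) < e / 2"
    using py(3) e2 unfolding continuous_on_iff by blast
  show "\<exists>\<delta>>0. \<forall>q\<in>{0..} \<times> Dsq. dist q p < \<delta> \<longrightarrow>
      dist (u (fst q) (snd q)) (u (fst p) (snd p)) < e"
  proof (intro exI[of _ "min \<delta>1 \<delta>2"] conjI ballI impI)
    show "min \<delta>1 \<delta>2 > 0" using \<delta>1 \<delta>2 by simp
    fix q assume q: "q \<in> {0..} \<times> Dsq" and close: "dist q p < min \<delta>1 \<delta>2"
    obtain s z where qz: "q = (s, z)" "s \<ge> 0" "z \<in> Dsq" using q by auto
    have "\<bar>s - t\<bar> < \<delta>1"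
      using close dist_fst_le[of q p] qz py by (simp add: dist_real_def)
    then have "\<bar>u s z - u t z\<bar> \<le> e / 2" using \<delta>1 qz by blast
    moreover have "dist z y < \<delta>2" using close dist_snd_le[of q p] qz py by simp
    then have "\<bar>u t z - u t y\<bar> < e / 2" using \<delta>2 qz by (auto simp: dist_real_def)
    ultimately show "dist (u (fst q) (snd q)) (u (fst p) (snd p)) < e"
      using qz py abs_triangle_ineq[of "u s z - u t z" "u t z - u t y"]
      by (simp add: dist_real_def)
  qed
qed

lemma parabolic_min_principle:
  assumes "0 \<le> d" "d \<le> 1" "0 \<le> \<kappa>"
    and dom: "\<forall>t\<ge>0. u t \<in> DLd \<kappa> d" and "cont_E u"
    and super: "\<forall>t>0. \<forall>x\<in>Dsq. \<exists>ut. ((\<lambda>s. u s x) has_real_derivative ut) (at t)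
                      \<and> ut - Ld \<kappa> d (u t) x \<ge> 0"
    and init: "\<forall>x\<in>Dsq. 0 \<le> u 0 x"
    and "0 \<le> T" "x \<in> Dsq"
  shows "0 \<le> u T x"
proof (rule ccontr)
  assume neg: "\<not> 0 \<le> u T x"
  then have "T > 0" using init \<open>0 \<le> T\<close> \<open>x \<in> Dsq\<close> by (cases "T = 0") auto
  define \<epsilon> where "\<epsilon> = - u T x / (2 * T)"
  have \<epsilon>: "\<epsilon> > 0" using neg \<open>T > 0\<close> by (simp add: \<epsilon>_def divide_neg_pos)
  define W where "W p = u (fst p) (snd p) + \<epsilon> * fst p" for p
  define S where "S = {0..T} \<times> Dsq"
  have "continuous_on S W"
  proof -
    have "\<forall>t\<ge>0. continuous_on Dsq (u t)" using dom unfolding DLd_def Espace_def by auto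
    then have "continuous_on ({0..} \<times> Dsq) (\<lambda>p. u (fst p) (snd p))"
      using \<open>cont_E u\<close> by (rule continuous_on_Times_cont_E)
    then have "continuous_on S (\<lambda>p. u (fst p) (snd p))"
      unfolding S_def by (rule continuous_on_subset) auto
    then show ?thesis unfolding W_def by (intro continuous_intros)
  qed
  moreover have "compact S" "S \<noteq> {}"
    unfolding S_def Dsq_def using \<open>T > 0\<close> by (auto intro!: compact_Times compact_Icc)
  ultimately obtain t1 x1 where p1: "(t1, x1) \<in> S" and min: "\<And>q. q \<in> S \<Longrightarrow> W (t1, x1) \<le> W q"
    using continuous_attains_inf by (metis surj_pair)
  then have t1: "0 \<le> t1" "t1 \<le> T" "x1 \<in> Dsq" unfolding S_def by auto
  have "W (t1, x1) \<le> W (T, x)" using min \<open>0 \<le> T\<close> \<open>x \<in> Dsq\<close> unfolding S_def by auto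
  also have "\<dots> < 0" using neg \<open>T > 0\<close> unfolding W_def \<epsilon>_def by (simp add: field_simps)
  finally have "W (t1, x1) < 0" .
  then have "t1 > 0" using init t1 unfolding W_def by (cases "t1 = 0") auto
  have "u t1 x1 \<le> u t1 y" if "y \<in> Dsq" for y
    using min[of "(t1, y)"] that t1 unfolding S_def W_def by auto
  then have "Ld \<kappa> d (u t1) x1 \<ge> 0"
    using dom t1 assms(1-3) by (intro Ld_nonneg_at_min) auto
  then obtain ut where "((\<lambda>s. u s x1) has_real_derivative ut) (at t1)" "ut \<ge> 0"
    using super \<open>t1 > 0\<close> t1(3) by fastforce
  then have "((\<lambda>s. W (s, x1)) has_real_derivative ut + \<epsilon>) (at t1)" "ut + \<epsilon> > 0"
    using \<epsilon> unfolding W_def by (auto intro!: derivative_eq_intros)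
  then obtain h where "h > 0" "h < t1" "W (t1 - h, x1) < W (t1, x1)"
    using DERIV_pos_inc_left \<open>t1 > 0\<close>
    by (metis field_lbound_gt_zero)
  moreover have "(t1 - h, x1) \<in> S" using calculation t1 unfolding S_def by auto
  ultimately show False using min by fastforce
qed

theorem theorem2:
  fixes d \<kappa> :: real
  assumes "0 < d" "d \<le> 1" "0 < \<kappa>"
  shows "(\<forall>(u :: real \<Rightarrow> real \<times> real \<Rightarrow> real) (f :: real \<times> real \<Rightarrow> real).
            (\<forall>t\<ge>0. u t \<in> DLd \<kappa> d) \<and> cont_E u
            \<and> (\<forall>t>0. \<forall>x\<in>Dsq. (\<exists>ut. ((\<lambda>s. u s x) has_real_derivative ut) (at t)
                      \<and> ut - Ld \<kappa> d (u t) x \<ge> 0))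
            \<and> (\<forall>x\<in>Dsq. u 0 x = f x \<and> f x \<ge> 0)
            \<longrightarrow> (\<forall>t\<ge>0. \<forall>x\<in>Dsq. u t x \<ge> 0))
       \<and> (\<forall>u :: real \<times> real \<Rightarrow> real.
            u \<in> DLd \<kappa> d \<and> (\<forall>x\<in>Dsq. - Ld \<kappa> d u x \<ge> 0)
            \<longrightarrow> (\<forall>x\<in>Dsq. u x \<ge> 0))"
proof (intro conjI allI impI ballI; elim conjE)
  fix u :: "real \<Rightarrow> real \<times> real \<Rightarrow> real" and f :: "real \<times> real \<Rightarrow> real"
    and t :: real and x :: "real \<times> real"
  assume "\<forall>t\<ge>0. u t \<in> DLd \<kappa> d" "cont_E u"
    "\<forall>t>0. \<forall>x\<in>Dsq. \<exists>ut. ((\<lambda>s. u s x) has_real_derivative ut) (at t) \<and> ut - Ld \<kappa> d (u t) x \<ge> 0"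
    "\<forall>x\<in>Dsq. u 0 x = f x \<and> f x \<ge> 0" "t \<ge> 0" "x \<in> Dsq"
  then show "u t x \<ge> 0"
    using assms by (intro parabolic_min_principle[of d \<kappa> u]) auto
next
  fix u :: "real \<times> real \<Rightarrow> real" and x :: "real \<times> real"
  assume "u \<in> DLd \<kappa> d" "\<forall>x\<in>Dsq. - Ld \<kappa> d u x \<ge> 0" "x \<in> Dsq"
  then show "u x \<ge> 0"
    using assms by (intro elliptic_min_principle[of d \<kappa> u]) auto
qed

end
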